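(* There is a countable collection of languages $\mathcal{L}$ for which no algorithm can identify in the limit, even when the adversary is restricted to enumerations (of the target, without noise or omissions) that are $M$-bounded displacement enumerations with respect to the target, for any $M>1$.
   Context: The universe is $U=\mathbb{N}$ with its natural order; a language is an infinite subset of $U$ with canonical enumeration $\ell_1<\ell_2<\cdots$; a collection is a countable family of languages. For $x\in U$, $\sigma(x,L)=j$ if $x=\ell_j$ and $0$ if $x\notin L$. A sequence $x_1,x_2,\dots$ is an $M$-bounded displacement enumeration with respect to $L$ if there is $n^\star$ with $\sigma(x_n,L)\le Mn$ for all $n\ge n^\star$. An enumeration of $K$ (without noise or omissions) lists every element of $K$ exactly once and nothing else. An identification algorithm outputs, after seeing $x_1,\dots,x_n$ (knowing $\mathcal{L}$ but not $K$), a language of $\mathcal{L}$; it identifies $K$ in the limit on an enumeration if there is $n^\star$ such that its output equals $K$ for all $n\ge n^\star$; it identifies $\mathcal{L}$ in the limit under a class of enumerations if it does so for every $K\in\mathcal{L}$ and every enumeration of $K$ in the class. *)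

theory Defs
  imports Complex_Main "HOL-Library.Infinite_Set" "HOL-Library.Countable_Set"
begin

text \<open>Languages are infinite subsets of nat; a collection is a countable, nonempty family
  of languages.  The canonical enumeration of L is enumerate L (0-based), so
  l_j = enumerate L (j - 1).\<close>

definition language_collection :: "nat set set \<Rightarrow> bool" where
  "language_collection C \<longleftrightarrow> countable C \<and> C \<noteq> {} \<and> (\<forall>L\<in>C. infinite L)"

definition sigma :: "nat \<Rightarrow> nat set \<Rightarrow> nat" where
  "sigma x L = (if x \<in> L then Suc (THE j. enumerate L j = x) else 0)"

text \<open>Sequences are 0-indexed: x i is the element x_(i+1) of the paper.\<close>
definition bounded_displacement :: "real \<Rightarrow> nat set \<Rightarrow> (nat \<Rightarrow> nat) \<Rightarrow> bool" where
  "bounded_displacement M L x \<longleftrightarrow>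
     (\<exists>n0. \<forall>n\<ge>n0. real (sigma (x (n - 1)) L) \<le> M * real n)"

definition enumeration_of :: "nat set \<Rightarrow> (nat \<Rightarrow> nat) \<Rightarrow> bool" where
  "enumeration_of K x \<longleftrightarrow> bij_betw x UNIV K"

definition identifies_in_limit :: "(nat list \<Rightarrow> nat set) \<Rightarrow> nat set \<Rightarrow> (nat \<Rightarrow> nat) \<Rightarrow> bool" where
  "identifies_in_limit G K x \<longleftrightarrow> (\<exists>n0. \<forall>n\<ge>n0. G (map x [0..<n]) = K)"

end

theory Submission
  imports Defs "HOL-Library.Sublist"
begin

(* Take C = {N} together with all N - {b}.  An enumeration whose n-th element is at most n
   has M-bounded displacement for every M > 1 and every target.  The adversary builds such an
   enumeration of N in stages: having listed a permutation p of {0, ..., b - 1}, it continues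
   with b + 1, b + 2, ..., a valid presentation of N - {b}, until the learner conjectures
   N - {b}, which it must eventually do, and only then inserts b.  The limit enumerates N,
   yet the learner errs in every stage. *)

lemma sigma_le_Suc:
  assumes "infinite L"
  shows "sigma x L \<le> Suc x"
proof (cases "x \<in> L")
  case True
  then obtain j where j: "enumerate L j = x"
    using enumerate_Ex assms by blast
  then have "(THE j. enumerate L j = x) = j"
    using inj_enumerate[OF assms] by (auto simp: inj_eq)
  then show ?thesis
    using True j le_enumerate[OF assms, of j] by (simp add: sigma_def)
qed (simp add: sigma_def)

lemma bounded_displacement_if_le_add:
  assumes L: "infinite L" and M: "M > 1" and z: "\<And>m. z m \<le> m + c"
  shows "bounded_displacement M L z"
  unfolding bounded_displacement_def
proof (intro exI allI impI)
  fix n assume n: "nat \<lceil>c / (M - 1)\<rceil> + 1 \<le> n"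
  have "sigma (z (n - 1)) L \<le> n + c"
    using sigma_le_Suc[OF L, of "z (n - 1)"] z[of "n - 1"] n by linarith
  moreover have "c / (M - 1) \<le> n"
    using n real_nat_ceiling_ge[of "c / (M - 1)"] by linarith
  then have "c \<le> (M - 1) * n"
    using M by (simp add: pos_divide_le_eq mult.commute)
  ultimately show "real (sigma (z (n - 1)) L) \<le> M * real n"
    by (simp add: algebra_simps)
qed

definition bounded_perm :: "nat list \<Rightarrow> bool" where
  "bounded_perm p \<longleftrightarrow> distinct p \<and> set p = {..<length p} \<and> (\<forall>i<length p. p ! i \<le> Suc i)"

lemma bounded_perm_extend:
  assumes "bounded_perm p"
  shows "bounded_perm (p @ [Suc (length p)..<Suc t] @ [length p])"
    (is "bounded_perm ?q")
proof -
  let ?b = "length p"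
  have p: "set p = {..<?b}" "distinct p" "\<And>i. i < ?b \<Longrightarrow> p ! i \<le> Suc i"
    using assms by (auto simp: bounded_perm_def)
  have "?q ! i \<le> Suc i" if "i < length ?q" for i
  proof -
    have "i < Suc (?b + (t - ?b))"
      using that by (simp del: upt_Suc)
    then consider "i < ?b" | "?b \<le> i" "i < t" | "i = ?b + (t - ?b)"
      by linarith
    then show ?thesis
      by cases (use p(3) in \<open>auto simp: nth_append simp del: upt_Suc\<close>)
  qed
  with p(1,2) show ?thesis
    unfolding bounded_perm_def by (auto simp del: upt_Suc)
qed

lemma inj_if_distinct_prefixes:
  assumes "\<And>m. \<exists>n>m. distinct (map x [0..<n])"
  shows "inj x"
proof (rule injI)
  fix a b assume "x a = x b"
  moreover obtain n where "max a b < n" "distinct (map x [0..<n])"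
    using assms by blast
  ultimately show "a = b"
    by (auto simp: distinct_map dest: inj_onD)
qed

lemma bij_if_bounded_perm_prefixes:
  assumes "\<And>m. \<exists>n>m. bounded_perm (map x [0..<n])"
  shows "bij x" and "x m \<le> Suc m"
proof -
  have "\<exists>n>m. distinct (map x [0..<n])" for m
    using assms[of m] by (auto simp: bounded_perm_def)
  then have "inj x"
    by (rule inj_if_distinct_prefixes)
  moreover have "v \<in> range x" for v
  proof -
    obtain n where "v < n" "bounded_perm (map x [0..<n])"
      using assms by blast
    then have "v \<in> x ` {0..<n}"
      by (simp add: bounded_perm_def)
    then show ?thesis
      by blast
  qed
  ultimately show "bij x"
    by (auto simp: bij_def)
  obtain n where "m < n" "bounded_perm (map x [0..<n])"
    using assms by blast
  then show "x m \<le> Suc m"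
    by (auto simp: bounded_perm_def)
qed

lemma prefix_chain_limit:
  assumes chain: "\<And>k. prefix (s k) (s (Suc k))" and long: "\<And>k. k \<le> length (s k)"
  shows "\<exists>x. \<forall>k. map x [0..<length (s k)] = s k"
proof (intro exI allI)
  have mono: "prefix (s j) (s k)" if "j \<le> k" for j k
    using prefix_order.lift_Suc_mono_le[of s, OF chain that] .
  have nth_eq: "s j ! m = s k ! m" if "m < length (s j)" "m < length (s k)" for j k m
  proof -
    have "prefix (s j) (s k) \<or> prefix (s k) (s j)"
      by (cases "j \<le> k") (simp_all add: mono)
    then show ?thesis
      using that by (auto simp: prefix_def nth_append)
  qed
  fix k
  show "map (\<lambda>m. s (Suc m) ! m) [0..<length (s k)] = s k"
  proof (rule nth_equalityI)
    fix m assume "m < length (map (\<lambda>m. s (Suc m) ! m) [0..<length (s k)])"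
    moreover have "m < length (s (Suc m))"
      using long[of "Suc m"] by simp
    ultimately show "map (\<lambda>m. s (Suc m) ! m) [0..<length (s k)] ! m = s k ! m"
      using nth_eq[of m "Suc m" k] by simp
  qed simp
qed

definition skip_enum :: "nat list \<Rightarrow> nat \<Rightarrow> nat" where
  "skip_enum p n = (if n < length p then p ! n else Suc n)"

lemma map_skip_enum:
  assumes "length p \<le> t"
  shows "map (skip_enum p) [0..<t] = p @ [Suc (length p)..<Suc t]"
proof -
  have "[0..<t] = [0..<length p] @ [length p..<t]"
    using assms upt_add_eq_append[of 0 "length p" "t - length p"] by simp
  moreover have "map (skip_enum p) [0..<length p] = p"
    by (rule nth_equalityI) (simp_all add: skip_enum_def)
  moreover have "map (skip_enum p) [length p..<t] = map Suc [length p..<t]"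
    by (simp add: skip_enum_def del: upt_Suc)
  ultimately show ?thesis
    by (simp add: map_Suc_upt del: upt_Suc)
qed

lemma skip_enum_le_Suc: "bounded_perm p \<Longrightarrow> skip_enum p m \<le> Suc m"
  by (simp add: skip_enum_def bounded_perm_def)

lemma bij_betw_skip_enum:
  assumes p: "bounded_perm p"
  shows "bij_betw (skip_enum p) UNIV (- {length p})"
proof -
  have "distinct (map (skip_enum p) [0..<Suc (m + length p)])" for m
    using bounded_perm_extend[OF p, of "Suc (m + length p)"]
    by (simp add: bounded_perm_def map_skip_enum del: upt_Suc)
  then have "inj (skip_enum p)"
    by (intro inj_if_distinct_prefixes) (use less_add_Suc1 in blast)
  moreover have "range (skip_enum p) = - {length p}"
  proof (intro equalityI subsetI)
    fix v assume "v \<in> range (skip_enum p)"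
    then show "v \<in> - {length p}"
      using p nth_mem[of _ p] by (auto simp: skip_enum_def bounded_perm_def)
  next
    fix v assume v: "v \<in> - {length p}"
    show "v \<in> range (skip_enum p)"
    proof (cases "v < length p")
      case True
      then have "v \<in> set p"
        using p by (simp add: bounded_perm_def)
      then obtain i where "i < length p" "p ! i = v"
        by (auto simp: in_set_conv_nth)
      then show ?thesis
        by (metis rangeI skip_enum_def)
    next
      case False
      then have "skip_enum p (v - 1) = v"
        using v by (auto simp: skip_enum_def)
      then show ?thesis
        by (metis rangeI)
    qed
  qed
  ultimately show ?thesis
    by (simp add: bij_betw_def)
qed

lemma slow_enum_infinitely_often:
  fixes P :: "nat list \<Rightarrow> bool"
  assumes ext: "\<And>p. bounded_perm p \<Longrightarrow> \<exists>t>length p. P (p @ [Suc (length p)..<Suc t])"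
  shows "\<exists>x. bij x \<and> (\<forall>m. x m \<le> Suc m) \<and> (\<exists>\<^sub>\<infinity>n. P (map x [0..<n]))"
proof -
  obtain T where T: "\<And>p. bounded_perm p \<Longrightarrow> length p < T p \<and> P (p @ [Suc (length p)..<Suc (T p)])"
    using ext by metis
  define step where "step p = p @ [Suc (length p)..<Suc (T p)] @ [length p]" for p
  define s where "s k = (step ^^ k) []" for k
  have s_Suc: "s (Suc k) = step (s k)" for k
    by (simp add: s_def)
  have perm: "bounded_perm (s k)" for k
    by (induction k) (simp_all add: s_Suc step_def bounded_perm_extend del: upt_Suc,
        simp add: s_def bounded_perm_def)
  have grow: "length (s k) < T (s k)" and len_Suc: "length (s (Suc k)) = Suc (T (s k))" for k
    using T[OF perm[of k]] by (simp_all add: s_Suc step_def)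
  have long: "k \<le> length (s k)" for k
  proof (induction k)
    case (Suc k)
    then show ?case using grow[of k] len_Suc[of k] by simp
  qed simp
  have "prefix (s k) (s (Suc k))" for k
    by (simp add: s_Suc step_def)
  then obtain x where x: "\<And>k. map x [0..<length (s k)] = s k"
    using prefix_chain_limit[of s] long by blast
  have "\<exists>n>m. bounded_perm (map x [0..<n])" for m
    using x[of "Suc m"] perm[of "Suc m"] long[of "Suc m"] by (metis Suc_le_lessD)
  then have "bij x" "\<forall>m. x m \<le> Suc m"
    using bij_if_bounded_perm_prefixes by blast+
  moreover have "\<exists>n>m. P (map x [0..<n])" for m
  proof -
    let ?p = "s m"
    have "map x [0..<T ?p] = take (T ?p) (s (Suc m))"
      using x[of "Suc m"] len_Suc[of m] by (metis take_map take_upt lessI less_imp_le plus_nat.add_0)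
    also have "\<dots> = ?p @ [Suc (length ?p)..<Suc (T ?p)]"
      using T[OF perm[of m]] by (simp add: s_Suc step_def del: upt_Suc)
    finally have "P (map x [0..<T ?p])"
      using T[OF perm[of m]] by (simp del: upt_Suc)
    moreover have "m < T ?p"
      using grow[of m] long[of m] by simp
    ultimately show ?thesis
      by blast
  qed
  ultimately show ?thesis
    by (auto simp: INFM_nat)
qed

lemma conjecture_after_skip_enum:
  assumes "identifies_in_limit G K (skip_enum p)"
  obtains t where "length p < t" and "G (p @ [Suc (length p)..<Suc t]) = K"
proof -
  obtain n0 where n0: "\<forall>n\<ge>n0. G (map (skip_enum p) [0..<n]) = K"
    using assms by (auto simp: identifies_in_limit_def)
  define t where "t = max n0 (Suc (length p))"
  have "length p < t"
    by (simp add: t_def)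
  moreover have "G (map (skip_enum p) [0..<t]) = K"
    using n0 by (simp add: t_def)
  then have "G (p @ [Suc (length p)..<Suc t]) = K"
    by (simp add: map_skip_enum t_def del: upt_Suc)
  ultimately show thesis
    by (rule that)
qed

definition co_singletons :: "nat set set" where
  "co_singletons = insert UNIV (range (\<lambda>b. - {b}))"

lemma language_collection_co_singletons: "language_collection co_singletons"
  by (auto simp: language_collection_def co_singletons_def)

lemma learner_fails_on_co_singletons:
  fixes G :: "nat list \<Rightarrow> nat set" and M :: real
  assumes M: "M > 1"
  shows "\<exists>K\<in>co_singletons. \<exists>x. enumeration_of K x \<and> bounded_displacement M K x
    \<and> \<not> identifies_in_limit G K x"
proof (rule ccontr)
  assume "\<not> ?thesis"
  then have G: "identifies_in_limit G K x"
    if "K \<in> co_singletons" "enumeration_of K x" "bounded_displacement M K x" for K x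
    using that by blast
  have slow_enum_displacement: "bounded_displacement M L z" if "infinite L" "\<And>m. z m \<le> Suc m" for L z
    using bounded_displacement_if_le_add[OF that(1) M, of z 1] that(2) by simp
  have "\<exists>t>length p. G (p @ [Suc (length p)..<Suc t]) \<noteq> UNIV" if p: "bounded_perm p" for p
  proof -
    have "enumeration_of (- {length p}) (skip_enum p)"
      using bij_betw_skip_enum[OF p] by (simp add: enumeration_of_def)
    moreover have "bounded_displacement M (- {length p}) (skip_enum p)"
      by (rule slow_enum_displacement) (simp_all add: skip_enum_le_Suc[OF p])
    ultimately have "identifies_in_limit G (- {length p}) (skip_enum p)"
      by (intro G) (auto simp: co_singletons_def)
    then obtain t where "length p < t" "G (p @ [Suc (length p)..<Suc t]) = - {length p}"
      by (rule conjecture_after_skip_enum)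
    then show ?thesis
      by (intro exI[of _ t] conjI) auto
  qed
  then obtain x where x: "bij x" "\<forall>m. x m \<le> Suc m" and "\<exists>\<^sub>\<infinity>n. G (map x [0..<n]) \<noteq> UNIV"
    using slow_enum_infinitely_often[of "\<lambda>xs. G xs \<noteq> UNIV"] by auto
  moreover have "identifies_in_limit G UNIV x"
    using x by (intro G) (simp_all add: co_singletons_def enumeration_of_def slow_enum_displacement)
  ultimately show False
    unfolding identifies_in_limit_def INFM_nat_le by (meson order_refl le_trans)
qed

theorem theorem7p7:
  shows "\<exists>C. language_collection C \<and>
    (\<forall>M::real. M > 1 \<longrightarrow>
       \<not> (\<exists>G. (\<forall>xs. G xs \<in> C) \<and>
              (\<forall>K\<in>C. \<forall>x. enumeration_of K x \<and> bounded_displacement M K x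
                     \<longrightarrow> identifies_in_limit G K x)))"
proof (intro exI[of _ co_singletons] conjI allI impI notI)
  show "language_collection co_singletons"
    by (rule language_collection_co_singletons)
  fix M :: real
  assume "M > 1" and "\<exists>G. (\<forall>xs. G xs \<in> co_singletons) \<and>
    (\<forall>K\<in>co_singletons. \<forall>x. enumeration_of K x \<and> bounded_displacement M K x
      \<longrightarrow> identifies_in_limit G K x)"
  then show False
    using learner_fails_on_co_singletons by blast
qed

end
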